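(* Let $(R,d)$ be a fusion algebra with set of irreducible objects $I$. For every finite, symmetric ($\bar X=X$), nonempty set $X\subseteq I$ there exists $C_X>0$ such that for every finite set $A\subseteq I$ we have $|\partial_X(A)|\le C_X|\partial^{\mathrm{inn}}_X(A)|$. In particular, if $X$ is moreover generating, then $\mathrm{F\o l}_X(R,d)\le C_X\,\mathrm{F\o l}^{\mathrm{inn}}_X(R,d)$.
   Context: A fusion algebra $(R,d)$ consists of a set $I$ with distinguished $e$ and involution $\alpha\mapsto\bar\alpha$, a unital ring structure on $R=\mathbb{Z}[I]$ with unit $e$ and $\xi\eta=\sum_\alpha N^\alpha_{\xi,\eta}\alpha$, $N^\alpha_{\xi,\eta}\in\mathbb{Z}_{\ge0}$ finitely many nonzero, the involution extending to a $\mathbb{Z}$-linear antimultiplicative involution, Frobenius reciprocity $N^\alpha_{\xi,\eta}=N^\xi_{\alpha,\bar\eta}=N^\eta_{\bar\xi,\alpha}$, and $\mathbb{Z}$-linear multiplicative $d:R\to\mathbb{R}$ with $d(\bar\alpha)=d(\alpha)\ge1$ on $I$. $\mathrm{supp}(r)$: elements of $I$ with nonzero coefficient in $r$. $|A|=\sum_{\alpha\in A}d(\alpha)^2$, $A^c=I\setminus A$. $\partial_X(A)=\{\alpha\in A:\exists x\in X,\ \mathrm{supp}(\alpha x)\not\subseteq A\}\cup\{\alpha\in A^c:\exists x\in X,\ \mathrm{supp}(\alpha x)\not\subseteq A^c\}$, $\partial^{\mathrm{inn}}_X(A)=\{\alpha\in A:\exists x\in X,\ \mathrm{supp}(\alpha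 x)\not\subseteq A\}$. A finite generating set is a finite $X$, $\bar X=X$, such that every $\alpha\in I$ lies in $\mathrm{supp}(x_1\cdots x_n)$ for some $x_i\in X$. $\mathrm{F\o l}_X(R,d)=\inf_A|\partial_XA|/|A|$ and $\mathrm{F\o l}^{\mathrm{inn}}_X(R,d)=\inf_A|\partial^{\mathrm{inn}}_XA|/|A|$ over nonempty finite $A\subseteq I$. *)

theory Defs
  imports Complex_Main
begin

text \<open>A fusion algebra on the index type 'a (the set I of irreducibles).
  N a x y is the fusion coefficient of a in the product x y (basis elements),
  e is the unit, bar the involution, d the dimension function on I.
  d extends Z-linearly to R = Z[I]; multiplicativity of d on R is equivalent to
  multiplicativity on products of basis elements.\<close>

definition supp :: "('a \<Rightarrow> 'a \<Rightarrow> 'a \<Rightarrow> nat) \<Rightarrow> 'a \<Rightarrow> 'a \<Rightarrow> 'a set" where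
  "supp N x y = {a. N a x y \<noteq> 0}"

definition fusion_algebra ::
  "('a \<Rightarrow> 'a \<Rightarrow> 'a \<Rightarrow> nat) \<Rightarrow> 'a \<Rightarrow> ('a \<Rightarrow> 'a) \<Rightarrow> ('a \<Rightarrow> real) \<Rightarrow> bool" where
  "fusion_algebra N e bar d \<longleftrightarrow>
     (\<forall>x y. finite (supp N x y)) \<and>
     (\<forall>x a. N a e x = (if a = x then 1 else 0) \<and> N a x e = (if a = x then 1 else 0)) \<and>
     (\<forall>x y z a. (\<Sum>b\<in>supp N x y. N b x y * N a b z) = (\<Sum>b\<in>supp N y z. N b y z * N a x b)) \<and>
     (\<forall>a. bar (bar a) = a) \<and>
     (\<forall>a x y. N a x y = N (bar a) (bar y) (bar x)) \<and>
     (\<forall>a x y. N a x y = N x a (bar y) \<and> N a x y = N y (bar x) a) \<and>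
     (\<forall>x y. (\<Sum>a\<in>supp N x y. real (N a x y) * d a) = d x * d y) \<and>
     (\<forall>a. d (bar a) = d a \<and> d a \<ge> 1)"

text \<open>Product of an element r of Z[I] (with nonnegative coefficients) by a basis element x.\<close>
definition rmult :: "('a \<Rightarrow> 'a \<Rightarrow> 'a \<Rightarrow> nat) \<Rightarrow> ('a \<Rightarrow> nat) \<Rightarrow> 'a \<Rightarrow> ('a \<Rightarrow> nat)" where
  "rmult N r x = (\<lambda>a. \<Sum>b\<in>{b. r b \<noteq> 0}. r b * N a b x)"

definition wprod :: "('a \<Rightarrow> 'a \<Rightarrow> 'a \<Rightarrow> nat) \<Rightarrow> 'a \<Rightarrow> 'a list \<Rightarrow> ('a \<Rightarrow> nat)" where
  "wprod N e xs = foldl (rmult N) (\<lambda>a. if a = e then 1 else 0) xs"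

definition generating ::
  "('a \<Rightarrow> 'a \<Rightarrow> 'a \<Rightarrow> nat) \<Rightarrow> 'a \<Rightarrow> ('a \<Rightarrow> 'a) \<Rightarrow> 'a set \<Rightarrow> bool" where
  "generating N e bar X \<longleftrightarrow> finite X \<and> bar ` X = X \<and>
     (\<forall>a. \<exists>xs. xs \<noteq> [] \<and> set xs \<subseteq> X \<and> wprod N e xs a \<noteq> 0)"

definition wsize :: "('a \<Rightarrow> real) \<Rightarrow> 'a set \<Rightarrow> real" where
  "wsize d A = (\<Sum>a\<in>A. (d a)^2)"

definition inner_boundary ::
  "('a \<Rightarrow> 'a \<Rightarrow> 'a \<Rightarrow> nat) \<Rightarrow> 'a set \<Rightarrow> 'a set \<Rightarrow> 'a set" where
  "inner_boundary N X A = {a \<in> A. \<exists>x\<in>X. \<not> supp N a x \<subseteq> A}"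

definition boundary ::
  "('a \<Rightarrow> 'a \<Rightarrow> 'a \<Rightarrow> nat) \<Rightarrow> 'a set \<Rightarrow> 'a set \<Rightarrow> 'a set" where
  "boundary N X A = {a \<in> A. \<exists>x\<in>X. \<not> supp N a x \<subseteq> A}
                  \<union> {a \<in> - A. \<exists>x\<in>X. \<not> supp N a x \<subseteq> - A}"

definition Fol ::
  "('a \<Rightarrow> 'a \<Rightarrow> 'a \<Rightarrow> nat) \<Rightarrow> ('a \<Rightarrow> real) \<Rightarrow> 'a set \<Rightarrow> real" where
  "Fol N d X = Inf {wsize d (boundary N X A) / wsize d A | A. finite A \<and> A \<noteq> {}}"

definition Fol_inn ::
  "('a \<Rightarrow> 'a \<Rightarrow> 'a \<Rightarrow> nat) \<Rightarrow> ('a \<Rightarrow> real) \<Rightarrow> 'a set \<Rightarrow> real" where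
  "Fol_inn N d X = Inf {wsize d (inner_boundary N X A) / wsize d A | A. finite A \<and> A \<noteq> {}}"

end

theory Submission
  imports Defs
begin

text \<open>An outer boundary point a
  has some b \<in> supp(a x) \<inter> A with x \<in> X; by Frobenius reciprocity a \<in> supp(b bar(x)), so b is
  an inner boundary point and a is reached from it by the generator bar(x) \<in> X. Since the sum of
  d(a) over supp(b y) is at most d(b) d(y), the weight |supp(b y)| is at most (d(b) d(y))^2, and
  summing over inner boundary points b and y \<in> X bounds the weight of the outer boundary by |X|
  times that of the inner boundary.\<close>

lemma sum_power2_le_power2_sum:
  fixes f :: "'a \<Rightarrow> real"
  assumes "finite S" "\<And>x. x \<in> S \<Longrightarrow> 0 \<le> f x"
  shows "(\<Sum>x\<in>S. (f x)\<^sup>2) \<le> (\<Sum>x\<in>S. f x)\<^sup>2"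
  using assms
proof (induction S rule: finite_induct)
  case empty
  then show ?case by simp
next
  case (insert x S)
  have "0 \<le> f x * sum f S"
    using insert.prems by (simp add: sum_nonneg)
  then show ?case
    using insert by (simp add: power2_sum)
qed

lemma cInf_image_le_mult:
  fixes f g :: "'b \<Rightarrow> real"
  assumes "S \<noteq> {}" "C > 0"
    and "\<And>x. x \<in> S \<Longrightarrow> 0 \<le> f x" "\<And>x. x \<in> S \<Longrightarrow> f x \<le> C * g x"
  shows "Inf (f ` S) \<le> C * Inf (g ` S)"
proof -
  have "bdd_below (f ` S)"
    using assms(3) by (auto intro!: bdd_belowI[of _ 0])
  then have "Inf (f ` S) / C \<le> g x" if "x \<in> S" for x
    using cInf_lower[of "f x" "f ` S"] assms(2) assms(4)[OF that] that
    by (simp add: pos_divide_le_eq mult.commute)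
  then have "Inf (f ` S) / C \<le> Inf (g ` S)"
    using assms(1) by (intro cInf_greatest) auto
  then show ?thesis
    using assms(2) by (simp add: pos_divide_le_eq mult.commute)
qed

lemma wsize_nonneg: "0 \<le> wsize d A"
  unfolding wsize_def by (simp add: sum_nonneg)

lemma wsize_UN_le:
  assumes "finite I" "\<And>i. i \<in> I \<Longrightarrow> finite (F i)"
  shows "wsize d (\<Union>i\<in>I. F i) \<le> (\<Sum>i\<in>I. wsize d (F i))"
proof -
  have "(\<Union>i\<in>I. F i) = snd ` Sigma I F" by force
  then have "wsize d (\<Union>i\<in>I. F i) \<le> (\<Sum>p\<in>Sigma I F. (d (snd p))\<^sup>2)"
    unfolding wsize_def using sum_image_le[of "Sigma I F" "\<lambda>a. (d a)\<^sup>2" snd] assms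
    by (simp add: o_def)
  also have "\<dots> = (\<Sum>i\<in>I. wsize d (F i))"
    unfolding wsize_def using assms by (simp add: sum.Sigma case_prod_beta)
  finally show ?thesis .
qed

definition outer_boundary ::
  "('a \<Rightarrow> 'a \<Rightarrow> 'a \<Rightarrow> nat) \<Rightarrow> 'a set \<Rightarrow> 'a set \<Rightarrow> 'a set" where
  "outer_boundary N X A = {a \<in> - A. \<exists>x\<in>X. \<not> supp N a x \<subseteq> - A}"

lemma boundary_eq_inner_Un_outer:
  "boundary N X A = inner_boundary N X A \<union> outer_boundary N X A"
  unfolding boundary_def inner_boundary_def outer_boundary_def by simp

lemma inner_boundary_Int_outer_boundary: "inner_boundary N X A \<inter> outer_boundary N X A = {}"
  unfolding inner_boundary_def outer_boundary_def by auto

lemma finite_inner_boundary: "finite A \<Longrightarrow> finite (inner_boundary N X A)"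
  unfolding inner_boundary_def by simp

context
  fixes N :: "'a \<Rightarrow> 'a \<Rightarrow> 'a \<Rightarrow> nat" and e :: 'a and bar :: "'a \<Rightarrow> 'a" and d :: "'a \<Rightarrow> real"
  assumes fusion: "fusion_algebra N e bar d"
begin

lemma fusion_finite_supp: "finite (supp N b y)"
  using fusion unfolding fusion_algebra_def by blast

lemma fusion_dim_ge_1: "1 \<le> d a"
  using fusion unfolding fusion_algebra_def by blast

lemma fusion_dim_supp: "(\<Sum>a\<in>supp N b y. real (N a b y) * d a) = d b * d y"
  using fusion unfolding fusion_algebra_def by blast

lemma fusion_frobenius: "N a x y = N x a (bar y)"
  using fusion unfolding fusion_algebra_def by blast

lemma fusion_mem_supp_conj: "b \<in> supp N a x \<Longrightarrow> a \<in> supp N b (bar x)"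
  unfolding supp_def by (simp add: fusion_frobenius[of b a x])

lemma fusion_wsize_supp_le: "wsize d (supp N b y) \<le> (d b)\<^sup>2 * (d y)\<^sup>2"
proof -
  let ?S = "supp N b y"
  have "(\<Sum>a\<in>?S. d a) \<le> (\<Sum>a\<in>?S. real (N a b y) * d a)"
  proof (rule sum_mono)
    fix a assume "a \<in> ?S"
    then have "1 \<le> real (N a b y)" unfolding supp_def by simp
    then show "d a \<le> real (N a b y) * d a"
      using fusion_dim_ge_1[of a] by (simp add: mult_le_cancel_right1)
  qed
  then have "(\<Sum>a\<in>?S. d a) \<le> d b * d y"
    by (simp add: fusion_dim_supp)
  moreover have "0 \<le> (\<Sum>a\<in>?S. d a)"
    using fusion_dim_ge_1 by (meson sum_nonneg order_trans zero_le_one)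
  ultimately have "(\<Sum>a\<in>?S. d a)\<^sup>2 \<le> (d b * d y)\<^sup>2"
    by (simp add: power_mono)
  moreover have "wsize d ?S \<le> (\<Sum>a\<in>?S. d a)\<^sup>2"
    unfolding wsize_def using fusion_finite_supp fusion_dim_ge_1
    by (intro sum_power2_le_power2_sum) (auto intro: order_trans[OF zero_le_one])
  ultimately show ?thesis
    by (simp add: power_mult_distrib)
qed

lemma outer_boundary_subset:
  assumes "bar ` X = X"
  shows "outer_boundary N X A \<subseteq> (\<Union>(b, y)\<in>inner_boundary N X A \<times> X. supp N b y)"
proof
  fix a assume "a \<in> outer_boundary N X A"
  then obtain x b where "a \<notin> A" "x \<in> X" "b \<in> supp N a x" "b \<in> A"
    unfolding outer_boundary_def by auto
  moreover have "a \<in> supp N b (bar x)"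
    using \<open>b \<in> supp N a x\<close> by (rule fusion_mem_supp_conj)
  moreover have "bar x \<in> X"
    using \<open>x \<in> X\<close> assms by blast
  ultimately have "b \<in> inner_boundary N X A"
    unfolding inner_boundary_def by blast
  with \<open>a \<in> supp N b (bar x)\<close> \<open>bar x \<in> X\<close>
  show "a \<in> (\<Union>(b, y)\<in>inner_boundary N X A \<times> X. supp N b y)"
    by blast
qed

lemma finite_outer_boundary:
  assumes "finite X" "bar ` X = X" "finite A"
  shows "finite (outer_boundary N X A)"
  using assms(1,3)
  by (intro finite_subset[OF outer_boundary_subset[OF assms(2)]] finite_UN_I)
    (auto simp: finite_inner_boundary fusion_finite_supp)

lemma wsize_outer_boundary_le:
  assumes "finite X" "bar ` X = X" "finite A"
  shows "wsize d (outer_boundary N X A) \<le> wsize d (inner_boundary N X A) * wsize d X"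
proof -
  let ?I = "inner_boundary N X A"
  have fin: "finite (?I \<times> X)"
    using assms by (simp add: finite_inner_boundary)
  have "wsize d (outer_boundary N X A) \<le> wsize d (\<Union>(b, y)\<in>?I \<times> X. supp N b y)"
    unfolding wsize_def using fin fusion_finite_supp outer_boundary_subset[OF assms(2)]
    by (intro sum_mono2) auto
  also have "\<dots> \<le> (\<Sum>(b, y)\<in>?I \<times> X. wsize d (supp N b y))"
    using wsize_UN_le[OF fin, of "\<lambda>(b, y). supp N b y" d] fusion_finite_supp
    by (simp add: case_prod_beta)
  also have "\<dots> \<le> (\<Sum>(b, y)\<in>?I \<times> X. (d b)\<^sup>2 * (d y)\<^sup>2)"
    by (intro sum_mono) (auto simp: fusion_wsize_supp_le)
  also have "\<dots> = wsize d ?I * wsize d X"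
    unfolding wsize_def sum_product sum.cartesian_product ..
  finally show ?thesis .
qed

lemma wsize_boundary_le:
  assumes "finite X" "bar ` X = X" "finite A"
  shows "wsize d (boundary N X A) \<le> (1 + wsize d X) * wsize d (inner_boundary N X A)"
proof -
  have "wsize d (boundary N X A) = wsize d (inner_boundary N X A) + wsize d (outer_boundary N X A)"
    unfolding boundary_eq_inner_Un_outer wsize_def
    using assms inner_boundary_Int_outer_boundary
    by (intro sum.union_disjoint finite_inner_boundary finite_outer_boundary)
  with wsize_outer_boundary_le[OF assms] show ?thesis
    by (simp add: algebra_simps)
qed

end

lemma Fol_le_mult_Fol_inn:
  fixes N :: "'a \<Rightarrow> 'a \<Rightarrow> 'a \<Rightarrow> nat"
  assumes "C > 0"
    and "\<And>A. finite A \<Longrightarrow> wsize d (boundary N X A) \<le> C * wsize d (inner_boundary N X A)"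
  shows "Fol N d X \<le> C * Fol_inn N d X"
  unfolding Fol_def Fol_inn_def image_Collect [symmetric]
proof (rule cInf_image_le_mult)
  fix A :: "'a set" assume "A \<in> {A. finite A \<and> A \<noteq> {}}"
  then show "wsize d (boundary N X A) / wsize d A \<le> C * (wsize d (inner_boundary N X A) / wsize d A)"
    using assms(2) wsize_nonneg[of d A] by (simp add: divide_right_mono)
qed (use assms(1) in \<open>auto simp: wsize_nonneg divide_nonneg_nonneg\<close>)

theorem proposition3p3:
  fixes N :: "'a \<Rightarrow> 'a \<Rightarrow> 'a \<Rightarrow> nat" and e :: 'a and bar :: "'a \<Rightarrow> 'a"
    and d :: "'a \<Rightarrow> real" and X :: "'a set"
  assumes "fusion_algebra N e bar d"
    and "finite X" and "bar ` X = X" and "X \<noteq> {}"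
  shows "\<exists>C>0. (\<forall>A. finite A \<longrightarrow>
              wsize d (boundary N X A) \<le> C * wsize d (inner_boundary N X A))
           \<and> (generating N e bar X \<longrightarrow> Fol N d X \<le> C * Fol_inn N d X)"
proof -
  have C_pos: "1 + wsize d X > 0"
    using wsize_nonneg[of d X] by linarith
  have "\<And>A. finite A \<Longrightarrow>
      wsize d (boundary N X A) \<le> (1 + wsize d X) * wsize d (inner_boundary N X A)"
    using wsize_boundary_le[OF assms(1-3)] .
  with C_pos show ?thesis
    using Fol_le_mult_Fol_inn by blast
qed

end
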